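(* Let $G$ be a totally bounded Abelian topological group with property $\mathfrak{h}$. Then $G$ has no infinite compact subsets.
   Context: $\mathbb{T}$ is the circle group. A subgroup $N$ of a topological Abelian group $G$ is $h$-embedded in $G$ if every group homomorphism $N\to\mathbb{T}$ extends to a continuous homomorphism $G\to\mathbb{T}$. $G$ has property $\mathfrak{h}$ if every countable subgroup of $G$ is $h$-embedded in $G$. *)

theory Defs
  imports "HOL-Analysis.Analysis" "HOL-Algebra.Group"
begin

definition topological_ab_group :: "('a, 'b) monoid_scheme \<Rightarrow> 'a topology \<Rightarrow> bool" where
  "topological_ab_group G X \<longleftrightarrow>
     comm_group G \<and> topspace X = carrier G \<and>
     continuous_map (prod_topology X X) X (\<lambda>(x, y). x \<otimes>\<^bsub>G\<^esub> y) \<and>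
     continuous_map X X (\<lambda>x. inv\<^bsub>G\<^esub> x)"

definition totally_bounded_group :: "('a, 'b) monoid_scheme \<Rightarrow> 'a topology \<Rightarrow> bool" where
  "totally_bounded_group G X \<longleftrightarrow>
     (\<forall>U. openin X U \<and> \<one>\<^bsub>G\<^esub> \<in> U \<longrightarrow>
        (\<exists>F. finite F \<and> F \<subseteq> carrier G \<and>
             carrier G = (\<Union>x\<in>F. {x \<otimes>\<^bsub>G\<^esub> u | u. u \<in> U})))"

definition circle_group :: "complex monoid" where
  "circle_group = \<lparr>carrier = sphere 0 1, mult = (*), one = 1\<rparr>"

definition circle_top :: "complex topology" where
  "circle_top = top_of_set (sphere 0 1)"

definition h_embedded :: "('a, 'b) monoid_scheme \<Rightarrow> 'a topology \<Rightarrow> 'a set \<Rightarrow> bool" where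
  "h_embedded G X N \<longleftrightarrow>
     (\<forall>f \<in> hom (G\<lparr>carrier := N\<rparr>) circle_group.
        \<exists>g \<in> hom G circle_group. continuous_map X circle_top g \<and> (\<forall>x\<in>N. g x = f x))"

definition property_h :: "('a, 'b) monoid_scheme \<Rightarrow> 'a topology \<Rightarrow> bool" where
  "property_h G X \<longleftrightarrow> (\<forall>N. subgroup N G \<and> countable N \<longrightarrow> h_embedded G X N)"

end

theory Submission
  imports Defs "HOL-Algebra.Generated_Groups"
begin

text \<open>
  Property h makes every abstract character of a countable subgroup continuous, and characters
  of countable subgroups can be built one generator at a time: extending from \<open>H\<close> to
  \<open>H\<langle>e\<rangle>\<close> with \<open>e \<notin> H\<close>, the value at \<open>e\<close> may be put into any closed half-plane
  through the origin. Suppose \<open>A\<close> is an infinite subset of a compact set \<open>K\<close>, contained in a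
  countable subgroup \<open>N\<close>, such that for every \<open>p \<in> N\<close> each infinite subset of \<open>A\<close> has an
  infinite subset mapped by a continuous character into the half-plane opposite to the image
  of \<open>p\<close>. Enumerating \<open>N\<close> and diagonalising yields a sequence in \<open>A\<close> whose tails are
  separated in this way from the successive points of \<open>N\<close>. Its accumulation point in \<open>K\<close> lies
  in \<open>N\<close>, because countable subgroups are closed, and then an open half-plane neighbourhood of
  it misses a tail, which is absurd.

  Finitely generated subgroups meet compact sets in finite sets, by induction on the number of
  generators. If compact sets meet \<open>H\<close> finitely, they meet every coset of \<open>H\<close> finitely; this
  settles \<open>H\<langle>e\<rangle>\<close> when \<open>e\<close> has finite order modulo \<open>H\<close>. Otherwise every infinite subset
  of \<open>K \<inter> H\<langle>e\<rangle>\<close> takes infinitely many values of the \<open>e\<close>-coordinate \<open>\<kappa>\<close>, so for a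
  suitable unit \<open>z\<close> the character \<open>x \<mapsto> z ^ \<kappa>(x)\<close> provides the half-plane condition and
  \<open>K \<inter> H\<langle>e\<rangle>\<close> is finite by the above. If an infinite compact \<open>K\<close> met every finitely
  generated subgroup finitely, there would be \<open>a\<^sub>0, a\<^sub>1, \<dots> \<in> K\<close>, each outside the subgroup
  generated by its predecessors; extending a character along these subgroups puts \<open>a\<^sub>n\<close>
  into the required half-plane at the \<open>n\<close>-th step, and again the \<open>a\<^sub>n\<close> cannot accumulate.
\<close>

section \<open>Characters into the circle group\<close>

lemma hom_circle_group_iff:
  "\<phi> \<in> hom M circle_group \<longleftrightarrow>
     (\<forall>x\<in>carrier M. norm (\<phi> x) = 1) \<and>
     (\<forall>x\<in>carrier M. \<forall>y\<in>carrier M. \<phi> (x \<otimes>\<^bsub>M\<^esub> y) = \<phi> x * \<phi> y)"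
  by (auto simp: hom_def circle_group_def Pi_def)

lemma comm_group_circle_group: "comm_group circle_group"
proof (rule comm_groupI)
  fix u assume "u \<in> carrier circle_group"
  then have "norm u = 1" "u \<noteq> 0" by (auto simp: circle_group_def)
  then show "\<exists>v\<in>carrier circle_group. v \<otimes>\<^bsub>circle_group\<^esub> u = \<one>\<^bsub>circle_group\<^esub>"
    by (intro bexI[of _ "inverse u"]) (auto simp: circle_group_def norm_inverse)
qed (auto simp: circle_group_def norm_mult)

lemma group_circle_group: "group circle_group"
  using comm_group_circle_group by (simp add: comm_group_def)

lemma circle_group_int_pow:
  assumes "norm u = 1"
  shows "u [^]\<^bsub>circle_group\<^esub> (c::int) = u powi c"
proof -
  have nat_pow: "u [^]\<^bsub>circle_group\<^esub> (n::nat) = u ^ n" for n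
    by (induction n) (simp_all add: circle_group_def)
  have "u \<noteq> 0" using assms by auto
  then have "inv\<^bsub>circle_group\<^esub> (u ^ n) = inverse (u ^ n)" for n :: nat
    using assms by (intro group.inv_equality[OF group_circle_group])
      (auto simp: circle_group_def norm_power norm_inverse)
  then show ?thesis
    by (simp add: int_pow_def2 nat_pow power_int_def power_inverse)
qed

lemma (in group) character_group_hom:
  assumes "subgroup H G" "\<phi> \<in> hom (G\<lparr>carrier := H\<rparr>) circle_group"
  shows "group_hom (G\<lparr>carrier := H\<rparr>) circle_group \<phi>"
  using assms subgroup.subgroup_is_group[OF assms(1) is_group] group_circle_group
  by (simp add: group_hom_def group_hom_axioms_def)

lemma (in group) character_one:
  assumes "subgroup H G" "\<phi> \<in> hom (G\<lparr>carrier := H\<rparr>) circle_group"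
  shows "\<phi> \<one> = 1"
  using group_hom.hom_one[OF character_group_hom[OF assms]] by (simp add: circle_group_def)

lemma (in group) character_int_pow:
  assumes H: "subgroup H G" and \<phi>: "\<phi> \<in> hom (G\<lparr>carrier := H\<rparr>) circle_group" and x: "x \<in> H"
  shows "\<phi> (x [^] (c::int)) = \<phi> x powi c"
proof -
  have "norm (\<phi> x) = 1" using \<phi> x by (simp add: hom_circle_group_iff)
  then show ?thesis
    using group_hom.hom_int_pow[OF character_group_hom[OF H \<phi>], of x c] x
    by (simp add: int_pow_consistent[OF H x] circle_group_int_pow)
qed

lemma continuous_map_circle_top_openin_preimage:
  assumes "continuous_map X circle_top g" "open T"
  shows "openin X {x \<in> topspace X. g x \<in> T}"
proof -
  have "continuous_map X euclidean g"
    using assms(1) by (simp add: circle_top_def continuous_map_in_subtopology)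
  then show ?thesis using assms(2) by (simp add: openin_continuous_map_preimage)
qed

section \<open>Units in half-planes\<close>

lemma cos_nonpos_mod_2pi:
  fixes k :: int
  assumes "pi / 2 \<le> y - 2 * pi * k" "y - 2 * pi * k \<le> 3 * pi / 2"
  shows "cos y \<le> 0"
proof -
  have "0 \<le> cos (y - 2 * pi * k - pi)" using assms by (intro cos_ge_zero) auto
  moreover have "cos (y - 2 * pi * k - pi) = - cos y"
    using cos_int_2pin[of k] sin_int_2pin[of k] by (simp add: cos_diff sin_diff)
  ultimately show ?thesis by simp
qed

lemma exists_root_in_half_plane:
  fixes v r :: complex
  assumes m: "m \<ge> 2" and v: "norm v = 1" and r: "norm r = 1"
  shows "\<exists>w. norm w = 1 \<and> w ^ m = v \<and> Re (w / r) \<le> 0"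
proof -
  define t where "t = Arg (v / r ^ m)"
  have "norm (v / r ^ m) = 1" using v r by (simp add: norm_divide norm_power)
  then have t: "cis t = v / r ^ m" unfolding t_def using r by (subst cis_Arg) (auto simp: sgn_div_norm)
  define j :: int where "j = \<lceil>(real m * pi / 2 - t) / (2 * pi)\<rceil>"
  define \<theta> where "\<theta> = (t + 2 * pi * j) / real m"
  have mpos: "real m > 0" using m by simp
  have j: "(real m * pi / 2 - t) / (2 * pi) \<le> j" "j < (real m * pi / 2 - t) / (2 * pi) + 1"
    unfolding j_def by linarith+
  then have "real m * pi / 2 \<le> t + 2 * pi * j" using pi_gt_zero by (simp add: field_simps)
  then have \<theta>_lower: "pi / 2 \<le> \<theta>" using mpos by (simp add: \<theta>_def field_simps)
  have "t + 2 * pi * j < real m * pi / 2 + 2 * pi" using j pi_gt_zero by (simp add: field_simps)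
  then have "\<theta> < (real m * pi / 2 + 2 * pi) / real m"
    unfolding \<theta>_def using mpos by (rule divide_strict_right_mono)
  also have "\<dots> = pi / 2 + 2 * pi / real m" using mpos by (simp add: field_simps)
  finally have "\<theta> < pi / 2 + 2 * pi / real m" .
  moreover have "2 * pi / real m \<le> pi" using m pi_gt_zero by (simp add: field_simps)
  ultimately have "cos \<theta> \<le> 0" using \<theta>_lower cos_nonpos_mod_2pi[of \<theta> 0] by simp
  have "cis \<theta> ^ m = cis (real m * \<theta>)" by (rule Complex.DeMoivre)
  also have "\<dots> = cis (t + 2 * pi * j)" using mpos by (simp add: \<theta>_def)
  also have "\<dots> = cis t" by (simp add: cis_mult[symmetric])
  finally have "(r * cis \<theta>) ^ m = v" using t r by (auto simp: power_mult_distrib)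
  moreover have "norm (r * cis \<theta>) = 1" using r by (simp add: norm_mult)
  moreover have "Re (r * cis \<theta> / r) \<le> 0" using r \<open>cos \<theta> \<le> 0\<close> by auto
  ultimately show ?thesis by blast
qed

lemma exists_cos_nonpos_arc:
  fixes n :: nat and l d :: real
  assumes n: "n \<ge> 1" and d: "5 \<le> 4 * real n * d"
  shows "\<exists>l'. l \<le> l' \<and> l' + 1 / (4 * real n) \<le> l + d \<and>
    (\<forall>\<theta>. l' \<le> \<theta> \<and> \<theta> \<le> l' + 1 / (4 * real n) \<longrightarrow> cos (2 * pi * n * \<theta>) \<le> 0)"
proof -
  have npos: "real n > 0" using n by simp
  define k :: int where "k = \<lceil>n * l - 1 / 4\<rceil>"
  have k: "n * l - 1 / 4 \<le> k" "k < n * l + 3 / 4" unfolding k_def by linarith+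
  define l' where "l' = (k + 1 / 4) / n"
  have "l \<le> l'" using k npos by (simp add: l'_def field_simps)
  moreover have "l' + 1 / (4 * real n) \<le> l + d"
  proof -
    have "l' + 1 / (4 * real n) = (k + 1 / 2) / n" using npos by (simp add: l'_def field_simps)
    also have "\<dots> \<le> (n * l + 5 / 4) / n" using k npos by (intro divide_right_mono) auto
    also have "\<dots> = l + 5 / (4 * real n)" using npos by (simp add: field_simps)
    also have "5 / (4 * real n) \<le> d" using d npos by (simp add: field_simps)
    finally show ?thesis by simp
  qed
  moreover have "cos (2 * pi * n * \<theta>) \<le> 0" if "l' \<le> \<theta>" "\<theta> \<le> l' + 1 / (4 * real n)" for \<theta>
  proof (rule cos_nonpos_mod_2pi[of _ k])
    have "1 / 4 \<le> n * \<theta> - k" "n * \<theta> - k \<le> 1 / 2"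
      using that npos by (simp_all add: l'_def field_simps)
    then have "2 * pi * (1 / 4) \<le> 2 * pi * (n * \<theta> - k)" "2 * pi * (n * \<theta> - k) \<le> 2 * pi * (1 / 2)"
      by (simp_all add: mult_left_mono)
    then show "pi / 2 \<le> 2 * pi * n * \<theta> - 2 * pi * k" "2 * pi * n * \<theta> - 2 * pi * k \<le> 3 * pi / 2"
      using pi_gt_zero by (simp_all add: algebra_simps)
  qed
  ultimately show ?thesis by blast
qed

lemma nested_intervals_common_point:
  fixes l u :: "nat \<Rightarrow> real"
  assumes l: "incseq l" and u: "decseq u" and lu: "\<And>j. l j \<le> u j"
  shows "\<exists>\<theta>. \<forall>j. l j \<le> \<theta> \<and> \<theta> \<le> u j"
proof -
  have l_le_u: "l i \<le> u j" for i j
  proof -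
    have "l i \<le> l (max i j)" "u (max i j) \<le> u j" using l u by (auto simp: incseq_def decseq_def)
    then show ?thesis using lu[of "max i j"] by linarith
  qed
  then have "bdd_above (range l)" by (auto intro!: bdd_aboveI[of _ "u 0"])
  then show ?thesis using l_le_u by (intro exI[of _ "SUP j. l j"]) (auto intro: cSUP_upper cSUP_least)
qed

text \<open>
  Nested arcs: an arc of length \<open>1/(4n)\<close> on which \<open>cos (2\<pi>n\<theta>) \<le> 0\<close> contains such an
  arc for any \<open>n' \<ge> 5n\<close>.
\<close>
lemma exists_cos_nonpos_infinitely_often:
  fixes P :: "nat set"
  assumes P: "infinite P"
  shows "\<exists>\<theta>. infinite {n\<in>P. cos (2 * pi * n * \<theta>) \<le> 0}"
proof -
  define arc where "arc n l \<longleftrightarrow> n \<in> P \<and> n \<ge> 1 \<and>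
      (\<forall>\<theta>. l \<le> \<theta> \<and> \<theta> \<le> l + 1 / (4 * real n) \<longrightarrow> cos (2 * pi * n * \<theta>) \<le> 0)" for n l
  have unbounded: "\<exists>n\<in>P. k \<le> n" for k using P unfolding infinite_nat_iff_unbounded_le by blast
  define refines :: "nat \<times> real \<Rightarrow> nat \<times> real \<Rightarrow> bool" where
    "refines x y \<longleftrightarrow> fst x < fst y \<and> snd x \<le> snd y \<and>
       snd y + 1 / (4 * real (fst y)) \<le> snd x + 1 / (4 * real (fst x))" for x y
  have "\<exists>f. \<forall>j. arc (fst (f j)) (snd (f j)) \<and> refines (f j) (f (Suc j))"
  proof (rule dependent_nat_choice)
    obtain n where n: "n \<in> P" "1 \<le> n" using unbounded by blast
    then obtain l where "\<forall>\<theta>. l \<le> \<theta> \<and> \<theta> \<le> l + 1 / (4 * real n) \<longrightarrow> cos (2 * pi * n * \<theta>) \<le> 0"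
      using exists_cos_nonpos_arc[of n 2 0] by auto
    then show "\<exists>x. arc (fst x) (snd x)" using n by (auto simp: arc_def)
  next
    fix x :: "nat \<times> real" and j assume "arc (fst x) (snd x)"
    then obtain n l where x: "x = (n, l)" and n: "1 \<le> n" by (cases x) (auto simp: arc_def)
    obtain n' where n': "n' \<in> P" "5 * n + 1 \<le> n'" using unbounded by blast
    then have "1 \<le> n'" "5 \<le> 4 * real n' * (1 / (4 * real n))" using n by (auto simp: field_simps)
    then obtain l' where "l \<le> l'" "l' + 1 / (4 * real n') \<le> l + 1 / (4 * real n)"
        "\<forall>\<theta>. l' \<le> \<theta> \<and> \<theta> \<le> l' + 1 / (4 * real n') \<longrightarrow> cos (2 * pi * n' * \<theta>) \<le> 0"
      using exists_cos_nonpos_arc by blast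
    then show "\<exists>y. arc (fst y) (snd y) \<and> refines x y"
      using x n' \<open>1 \<le> n'\<close> by (intro exI[of _ "(n', l')"]) (auto simp: arc_def refines_def)
  qed
  then obtain f where f: "\<And>j. arc (fst (f j)) (snd (f j))" "\<And>j. refines (f j) (f (Suc j))"
    by blast
  define ns where "ns j = fst (f j)" for j
  define ls where "ls j = snd (f j)" for j
  have arcs: "arc (ns j) (ls j)" for j using f(1) by (simp add: ns_def ls_def)
  have step: "ns j < ns (Suc j) \<and> ls j \<le> ls (Suc j) \<and>
      ls (Suc j) + 1 / (4 * real (ns (Suc j))) \<le> ls j + 1 / (4 * real (ns j))" for j
    using f(2)[of j] by (simp add: refines_def ns_def ls_def)
  obtain \<theta> where \<theta>: "\<And>j. ls j \<le> \<theta> \<and> \<theta> \<le> ls j + 1 / (4 * ns j)"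
    using nested_intervals_common_point[of ls "\<lambda>j. ls j + 1 / (4 * ns j)"] step
    by (auto intro: incseq_SucI decseq_SucI)
  have "range ns \<subseteq> {n\<in>P. cos (2 * pi * n * \<theta>) \<le> 0}" using arcs \<theta> by (auto simp: arc_def)
  moreover have "infinite (range ns)"
    using step by (intro range_inj_infinite strict_mono_imp_inj_on) (simp add: strict_mono_Suc_iff)
  ultimately show ?thesis using finite_subset by blast
qed

lemma exists_unit_powi_nonpos_infinitely_often:
  fixes f :: "'a \<Rightarrow> int"
  assumes "infinite (f ` S)"
  shows "\<exists>z. norm z = 1 \<and> infinite {a\<in>S. Re (z powi f a) \<le> 0}"
proof -
  define g where "g a = nat \<bar>f a\<bar>" for a
  have "f ` S \<subseteq> int ` g ` S \<union> uminus ` int ` g ` S"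
    by (force simp: g_def abs_if image_iff)
  then have "infinite (g ` S)" using assms by (meson finite_UnI finite_imageI finite_subset)
  then obtain \<theta> where \<theta>: "infinite {n\<in>g ` S. cos (2 * pi * n * \<theta>) \<le> 0}"
    using exists_cos_nonpos_infinitely_often by blast
  have Re_powi: "Re (cis (2 * pi * \<theta>) powi f a) = cos (2 * pi * g a * \<theta>)" for a
  proof -
    have "Re (cis (2 * pi * \<theta>) powi f a) = cos (\<bar>f a\<bar> * (2 * pi * \<theta>))"
      by (cases "f a \<ge> 0") (simp_all add: cis_power_int)
    then show ?thesis by (simp add: g_def algebra_simps)
  qed
  have "{n\<in>g ` S. cos (2 * pi * n * \<theta>) \<le> 0} = g ` {a\<in>S. Re (cis (2 * pi * \<theta>) powi f a) \<le> 0}"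
    by (auto simp: Re_powi)
  then show ?thesis using \<theta> by (intro exI[of _ "cis (2 * pi * \<theta>)"]) auto
qed

section \<open>Adjoining an element to a subgroup\<close>

text \<open>\<open>adjoin G H e\<close> is the subgroup \<open>H\<langle>e\<rangle>\<close> when \<open>G\<close> is commutative.\<close>

definition adjoin :: "('a, 'b) monoid_scheme \<Rightarrow> 'a set \<Rightarrow> 'a \<Rightarrow> 'a set" where
  "adjoin G H e = {h \<otimes>\<^bsub>G\<^esub> e [^]\<^bsub>G\<^esub> (c::int) | h c. h \<in> H}"

primrec span_list :: "('a, 'b) monoid_scheme \<Rightarrow> 'a list \<Rightarrow> 'a set" where
  "span_list G [] = {\<one>\<^bsub>G\<^esub>}"
| "span_list G (e # es) = adjoin G (span_list G es) e"

lemma adjoinI: "h \<in> H \<Longrightarrow> h \<otimes>\<^bsub>G\<^esub> e [^]\<^bsub>G\<^esub> (c::int) \<in> adjoin G H e"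
  unfolding adjoin_def by blast

lemma adjoinE:
  assumes "x \<in> adjoin G H e"
  obtains h and c :: int where "h \<in> H" "x = h \<otimes>\<^bsub>G\<^esub> e [^]\<^bsub>G\<^esub> c"
  using assms unfolding adjoin_def by blast

lemma countable_adjoin: "countable H \<Longrightarrow> countable (adjoin G H e)"
proof -
  assume "countable H"
  moreover have "adjoin G H e = (\<lambda>(h, c::int). h \<otimes>\<^bsub>G\<^esub> e [^]\<^bsub>G\<^esub> c) ` (H \<times> UNIV)"
    unfolding adjoin_def by force
  ultimately show ?thesis by simp
qed

lemma countable_span_list: "countable (span_list G es)"
  by (induction es) (simp_all add: countable_adjoin)

context comm_group
begin

lemma mult_int_pow_mult_int_pow:
  assumes "h \<in> carrier G" "h' \<in> carrier G" "e \<in> carrier G"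
  shows "(h \<otimes> e [^] (c::int)) \<otimes> (h' \<otimes> e [^] (c'::int)) = (h \<otimes> h') \<otimes> e [^] (c + c')"
  using assms by (subst int_pow_mult) (simp_all add: m_ac)

lemma int_pow_diff_eq_inv_mult:
  assumes "h \<in> carrier G" "h' \<in> carrier G" "e \<in> carrier G" "h \<otimes> e [^] (c::int) = h' \<otimes> e [^] (c'::int)"
  shows "e [^] (c - c') = inv h \<otimes> h'"
proof -
  have "e [^] c = inv h \<otimes> (h' \<otimes> e [^] c')"
    using inv_solve_left[of "e [^] c" h "h' \<otimes> e [^] c'"] assms by simp
  then show ?thesis using assms(1-3) by (simp add: int_pow_diff m_assoc)
qed

lemma subgroup_adjoin:
  assumes H: "subgroup H G" and e: "e \<in> carrier G"
  shows "subgroup (adjoin G H e) G"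
proof (rule subgroupI)
  have Hc: "H \<subseteq> carrier G" using H by (rule subgroup.subset)
  then show "adjoin G H e \<subseteq> carrier G" using e by (auto elim!: adjoinE)
  show "adjoin G H e \<noteq> {}" using adjoinI[OF subgroup.one_closed[OF H]] by blast
next
  fix x assume "x \<in> adjoin G H e"
  then obtain h c where h: "h \<in> H" and x: "x = h \<otimes> e [^] (c::int)" by (rule adjoinE)
  then have "inv x = inv h \<otimes> e [^] (- c)"
    using subgroup.mem_carrier[OF H h] e by (simp add: inv_mult int_pow_neg)
  then show "inv x \<in> adjoin G H e" by (simp add: adjoinI subgroup.m_inv_closed[OF H h])
next
  fix x y assume "x \<in> adjoin G H e" "y \<in> adjoin G H e"
  then obtain h c h' c' where h: "h \<in> H" "h' \<in> H"
    and "x = h \<otimes> e [^] (c::int)" "y = h' \<otimes> e [^] (c'::int)" by (metis adjoinE)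
  then have "x \<otimes> y = (h \<otimes> h') \<otimes> e [^] (c + c')"
    using subgroup.mem_carrier[OF H] e by (simp add: mult_int_pow_mult_int_pow)
  then show "x \<otimes> y \<in> adjoin G H e" by (simp add: adjoinI subgroup.m_closed[OF H h])
qed

lemma subset_adjoin:
  assumes "subgroup H G" "e \<in> carrier G"
  shows "H \<subseteq> adjoin G H e"
proof
  fix h assume "h \<in> H"
  then have "h \<otimes> e [^] (0::int) \<in> adjoin G H e" by (rule adjoinI)
  then show "h \<in> adjoin G H e" using subgroup.mem_carrier[OF assms(1) \<open>h \<in> H\<close>] by simp
qed

lemma mem_adjoin_self:
  assumes "subgroup H G" "e \<in> carrier G"
  shows "e \<in> adjoin G H e"
proof -
  have "\<one> \<otimes> e [^] (1::int) \<in> adjoin G H e" by (rule adjoinI[OF subgroup.one_closed[OF assms(1)]])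
  then show ?thesis using assms(2) by simp
qed

lemma subgroup_span_list: "set es \<subseteq> carrier G \<Longrightarrow> subgroup (span_list G es) G"
  by (induction es) (simp_all add: triv_subgroup subgroup_adjoin)

lemma int_pow_abs_in_subgroup:
  assumes "subgroup H G" "e \<in> carrier G" "e [^] (c::int) \<in> H"
  shows "e [^] \<bar>c\<bar> \<in> H"
  using assms by (cases "c \<ge> 0") (simp_all add: int_pow_neg subgroup.m_inv_closed)

lemma dvd_of_int_pow_in_subgroup:
  assumes H: "subgroup H G" and e: "e \<in> carrier G"
    and m: "0 < m" "e [^] int m \<in> H" and least: "\<And>n. 0 < n \<Longrightarrow> n < m \<Longrightarrow> e [^] int n \<notin> H"
    and c: "e [^] (c::int) \<in> H"
  shows "int m dvd c"
proof -
  have "c mod int m = c - int m * (c div int m)" by (simp add: minus_mult_div_eq_mod)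
  then have "e [^] (c mod int m) = e [^] c \<otimes> inv ((e [^] int m) [^] (c div int m))"
    using e by (simp add: int_pow_diff int_pow_pow)
  also have "\<dots> \<in> H"
    using H c m(2) by (simp add: subgroup.m_closed subgroup.m_inv_closed subgroup_int_pow_closed)
  finally have "e [^] (c mod int m) \<in> H" .
  moreover have "0 \<le> c mod int m" "c mod int m < int m" using m(1) by simp_all
  ultimately have "c mod int m = 0" using least[of "nat (c mod int m)"] by fastforce
  then show ?thesis by (simp add: dvd_eq_mod_eq_0)
qed


lemma character_adjoin_well_defined:
  assumes H: "subgroup H G" and \<phi>: "\<phi> \<in> hom (G\<lparr>carrier := H\<rparr>) circle_group"
    and e: "e \<in> carrier G" and w: "norm w = 1"
    and compatible: "\<And>c::int. e [^] c \<in> H \<Longrightarrow> \<phi> (e [^] c) = w powi c"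
    and h: "h \<in> H" "h' \<in> H" and eq: "h \<otimes> e [^] (c::int) = h' \<otimes> e [^] (c'::int)"
  shows "\<phi> h' * w powi c' = \<phi> h * w powi c"
proof -
  have hc: "h \<in> carrier G" "h' \<in> carrier G" using h subgroup.mem_carrier[OF H] by auto
  have d: "e [^] (c - c') = inv h \<otimes> h'" using int_pow_diff_eq_inv_mult[OF hc e eq] .
  have h'_eq: "h \<otimes> (inv h \<otimes> h') = h'" using hc by (simp add: m_assoc[symmetric])
  have "inv h \<otimes> h' \<in> H" using H h by (simp add: subgroup.m_closed subgroup.m_inv_closed)
  then have "\<phi> (h \<otimes> (inv h \<otimes> h')) = \<phi> h * \<phi> (inv h \<otimes> h')"
    using \<phi> h(1) by (simp add: hom_circle_group_iff)
  then have "\<phi> h' = \<phi> h * w powi (c - c')"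
    using compatible[of "c - c'"] d \<open>inv h \<otimes> h' \<in> H\<close> by (simp add: h'_eq)
  moreover have "w \<noteq> 0" using w by auto
  then have "w powi (c - c') * w powi c' = w powi c" by (simp flip: power_int_add)
  ultimately show ?thesis by (simp add: mult.assoc)
qed

lemma character_extend_adjoin:
  assumes H: "subgroup H G" and \<phi>: "\<phi> \<in> hom (G\<lparr>carrier := H\<rparr>) circle_group"
    and e: "e \<in> carrier G" and w: "norm w = 1"
    and compatible: "\<And>c::int. e [^] c \<in> H \<Longrightarrow> \<phi> (e [^] c) = w powi c"
  shows "\<exists>\<psi> \<in> hom (G\<lparr>carrier := adjoin G H e\<rparr>) circle_group.
           \<forall>h\<in>H. \<forall>c::int. \<psi> (h \<otimes> e [^] c) = \<phi> h * w powi c"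
proof -
  have Hc: "H \<subseteq> carrier G" using H by (rule subgroup.subset)
  have \<phi>_mult: "\<phi> (x \<otimes> y) = \<phi> x * \<phi> y" if "x \<in> H" "y \<in> H" for x y
    using \<phi> that by (simp add: hom_circle_group_iff)
  have \<phi>_norm: "norm (\<phi> x) = 1" if "x \<in> H" for x
    using \<phi> that by (simp add: hom_circle_group_iff)
  have w0: "w \<noteq> 0" using w by auto
  have well_defined: "\<phi> h' * w powi c' = \<phi> h * w powi c"
    if "h \<in> H" "h' \<in> H" "h \<otimes> e [^] c = h' \<otimes> e [^] c'" for h h' and c c' :: int
    using character_adjoin_well_defined[OF H \<phi> e w _ that] compatible by blast
  define \<psi> where "\<psi> x = (SOME z. \<exists>h\<in>H. \<exists>c::int. x = h \<otimes> e [^] c \<and> z = \<phi> h * w powi c)" for x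
  have \<psi>: "\<psi> (h \<otimes> e [^] c) = \<phi> h * w powi c" if "h \<in> H" for h and c :: int
    unfolding \<psi>_def
  proof (rule someI2)
    show "\<exists>h'\<in>H. \<exists>c'::int. h \<otimes> e [^] c = h' \<otimes> e [^] c' \<and> \<phi> h * w powi c = \<phi> h' * w powi c'"
      using that by blast
  next
    fix z assume "\<exists>h'\<in>H. \<exists>c'::int. h \<otimes> e [^] c = h' \<otimes> e [^] c' \<and> z = \<phi> h' * w powi c'"
    then obtain h' and c' :: int where "h' \<in> H" "h \<otimes> e [^] c = h' \<otimes> e [^] c'" "z = \<phi> h' * w powi c'"
      by blast
    then show "z = \<phi> h * w powi c" using well_defined[OF that] by blast
  qed
  have "\<psi> \<in> hom (G\<lparr>carrier := adjoin G H e\<rparr>) circle_group"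
    unfolding hom_circle_group_iff
  proof (intro conjI ballI)
    fix x assume "x \<in> carrier (G\<lparr>carrier := adjoin G H e\<rparr>)"
    then obtain h c where "h \<in> H" "x = h \<otimes> e [^] (c::int)" by (auto elim: adjoinE)
    then show "norm (\<psi> x) = 1" using \<psi> \<phi>_norm w by (simp add: norm_mult norm_power_int)
  next
    fix x y assume "x \<in> carrier (G\<lparr>carrier := adjoin G H e\<rparr>)" "y \<in> carrier (G\<lparr>carrier := adjoin G H e\<rparr>)"
    then obtain h c h' c' where h: "h \<in> H" "h' \<in> H"
      and xy: "x = h \<otimes> e [^] (c::int)" "y = h' \<otimes> e [^] (c'::int)" by (auto elim!: adjoinE)
    moreover have "h \<in> carrier G" "h' \<in> carrier G" using h Hc by auto
    ultimately have "x \<otimes> y = (h \<otimes> h') \<otimes> e [^] (c + c')"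
      using e by (simp add: mult_int_pow_mult_int_pow)
    moreover have "h \<otimes> h' \<in> H" using H h by (simp add: subgroup.m_closed)
    ultimately have "\<psi> (x \<otimes> y) = \<phi> h * \<phi> h' * w powi (c + c')" using \<psi> \<phi>_mult h by simp
    also have "\<dots> = \<psi> x * \<psi> y" using xy \<psi> h w0 by (simp add: power_int_add)
    finally show "\<psi> (x \<otimes>\<^bsub>G\<lparr>carrier := adjoin G H e\<rparr>\<^esub> y) = \<psi> x * \<psi> y" by simp
  qed
  with \<psi> show ?thesis by blast
qed

text \<open>
  If no nonzero power of \<open>e\<close> lies in \<open>H\<close>, any unit will do. Otherwise \<open>w\<close> has to be an
  \<open>m\<close>-th root of \<open>\<phi>(e\<^sup>m)\<close> for the least such \<open>m\<close>, which is at least 2 because \<open>e \<notin> H\<close>,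
  and one of these roots lies in every closed half-plane through the origin.
\<close>
lemma exists_compatible_unit_in_half_plane:
  assumes H: "subgroup H G" and \<phi>: "\<phi> \<in> hom (G\<lparr>carrier := H\<rparr>) circle_group"
    and e: "e \<in> carrier G" "e \<notin> H" and r: "norm r = 1"
  obtains w where "norm w = 1" "Re (w / r) \<le> 0" "\<And>c::int. e [^] c \<in> H \<Longrightarrow> \<phi> (e [^] c) = w powi c"
proof (cases "\<exists>n::nat. 0 < n \<and> e [^] int n \<in> H")
  case False
  have free: "c = 0" if "e [^] c \<in> H" for c :: int
  proof (rule ccontr)
    assume "c \<noteq> 0"
    moreover have "e [^] int (nat \<bar>c\<bar>) \<in> H" using int_pow_abs_in_subgroup[OF H e(1) that] by simp
    ultimately show False using False by (metis zero_less_nat_eq zero_less_abs_iff)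
  qed
  then have "\<phi> (e [^] c) = (- r) powi c" if "e [^] c \<in> H" for c :: int
    using free[OF that] character_one[OF H \<phi>] by simp
  moreover have "Re (- r / r) \<le> 0" using r by auto
  ultimately show thesis using that[of "- r"] r by auto
next
  case True
  define m where "m = (LEAST n::nat. 0 < n \<and> e [^] int n \<in> H)"
  have m: "0 < m" "e [^] int m \<in> H" using LeastI_ex[OF True] by (simp_all add: m_def)
  have least: "e [^] int n \<notin> H" if "0 < n" "n < m" for n
    using not_less_Least[of n "\<lambda>n. 0 < n \<and> e [^] int n \<in> H"] that by (simp add: m_def)
  have "m \<noteq> 1" using m e by auto
  then obtain w where w: "norm w = 1" "w ^ m = \<phi> (e [^] int m)" "Re (w / r) \<le> 0"
    using exists_root_in_half_plane[of m "\<phi> (e [^] int m)" r] m \<phi> r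
    by (auto simp: hom_circle_group_iff)
  have "\<phi> (e [^] c) = w powi c" if ec: "e [^] c \<in> H" for c :: int
  proof -
    obtain q where c: "c = int m * q"
      using dvd_of_int_pow_in_subgroup[OF H e(1) m least ec] by blast
    have "\<phi> (e [^] c) = \<phi> ((e [^] int m) [^] q)" using e by (simp add: c int_pow_pow)
    also have "\<dots> = (w ^ m) powi q" using character_int_pow[OF H \<phi> m(2)] w(2) by simp
    finally show ?thesis by (simp add: c power_int_mult)
  qed
  then show thesis using that w by blast
qed

lemma character_extend_adjoin_half_plane:
  assumes H: "subgroup H G" and \<phi>: "\<phi> \<in> hom (G\<lparr>carrier := H\<rparr>) circle_group"
    and e: "e \<in> carrier G" "e \<notin> H" and r: "norm r = 1"
  shows "\<exists>\<psi> \<in> hom (G\<lparr>carrier := adjoin G H e\<rparr>) circle_group.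
           (\<forall>x\<in>H. \<psi> x = \<phi> x) \<and> Re (\<psi> e / r) \<le> 0"
proof -
  obtain w where w: "norm w = 1" "Re (w / r) \<le> 0"
    and compatible: "\<And>c::int. e [^] c \<in> H \<Longrightarrow> \<phi> (e [^] c) = w powi c"
    using exists_compatible_unit_in_half_plane[OF H \<phi> e r] by blast
  then obtain \<psi> where \<psi>: "\<psi> \<in> hom (G\<lparr>carrier := adjoin G H e\<rparr>) circle_group"
    "\<forall>h\<in>H. \<forall>c::int. \<psi> (h \<otimes> e [^] c) = \<phi> h * w powi c"
    using character_extend_adjoin[OF H \<phi> e(1)] by blast
  have "\<psi> x = \<phi> x" if "x \<in> H" for x
  proof -
    have "x = x \<otimes> e [^] (0::int)" using subgroup.mem_carrier[OF H that] by simp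
    then show ?thesis using \<psi>(2) that by (metis power_int_0_right mult_1_right)
  qed
  moreover have "\<psi> e = w"
  proof -
    have "e = \<one> \<otimes> e [^] (1::int)" using e(1) by simp
    then show ?thesis using \<psi>(2) subgroup.one_closed[OF H] character_one[OF H \<phi>]
      by (metis power_int_1_right mult_1_left)
  qed
  ultimately show ?thesis using \<psi>(1) w(2) by blast
qed

lemma adjoin_free_coordinate:
  assumes H: "subgroup H G" and e: "e \<in> carrier G" and free: "\<And>c::int. e [^] c \<in> H \<Longrightarrow> c = 0"
  obtains co where "\<And>h c. h \<in> H \<Longrightarrow> co (h \<otimes> e [^] c) = (c::int)"
    and "\<And>z. norm z = 1 \<Longrightarrow>
           \<exists>\<psi> \<in> hom (G\<lparr>carrier := adjoin G H e\<rparr>) circle_group. \<forall>x\<in>adjoin G H e. \<psi> x = z powi co x"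
proof -
  define co where "co x = (SOME c. \<exists>h\<in>H. x = h \<otimes> e [^] (c::int))" for x
  have co: "co (h \<otimes> e [^] c) = c" if h: "h \<in> H" for h and c :: int
    unfolding co_def
  proof (rule someI2[where a = c])
    fix c' assume "\<exists>h'\<in>H. h \<otimes> e [^] c = h' \<otimes> e [^] (c'::int)"
    then obtain h' where h': "h' \<in> H" "h \<otimes> e [^] c = h' \<otimes> e [^] c'" by blast
    then have "e [^] (c - c') = inv h \<otimes> h'"
      using int_pow_diff_eq_inv_mult[OF _ _ e h'(2)] h h'(1) subgroup.mem_carrier[OF H] by blast
    then have "e [^] (c - c') \<in> H" using H h h' by (simp add: subgroup.m_closed subgroup.m_inv_closed)
    then show "c' = c" using free by fastforce
  qed (use h in blast)
  have trivial: "(\<lambda>_. 1) \<in> hom (G\<lparr>carrier := H\<rparr>) circle_group" by (simp add: hom_circle_group_iff)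
  have "\<exists>\<psi> \<in> hom (G\<lparr>carrier := adjoin G H e\<rparr>) circle_group. \<forall>x\<in>adjoin G H e. \<psi> x = z powi co x"
    if z: "norm z = 1" for z
  proof -
    have compatible: "1 = z powi c" if "e [^] c \<in> H" for c :: int using free[OF that] by simp
    obtain \<psi> where \<psi>: "\<psi> \<in> hom (G\<lparr>carrier := adjoin G H e\<rparr>) circle_group"
        "\<forall>h\<in>H. \<forall>c::int. \<psi> (h \<otimes> e [^] c) = 1 * z powi c"
      using character_extend_adjoin[OF H trivial e z compatible] by blast
    have "\<psi> x = z powi co x" if x: "x \<in> adjoin G H e" for x
    proof -
      obtain h and c :: int where "h \<in> H" "x = h \<otimes> e [^] c" using x by (rule adjoinE)
      then show ?thesis using \<psi>(2) by (simp add: co)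
    qed
    then show ?thesis using \<psi>(1) by blast
  qed
  with co show thesis by (rule that)
qed

lemma adjoin_subset_UN_rcos:
  assumes H: "subgroup H G" and e: "e \<in> carrier G" and m: "0 < m" "e [^] (m::int) \<in> H"
  shows "adjoin G H e \<subseteq> (\<Union>s\<in>{0..<m}. H #> e [^] s)"
proof
  fix x assume "x \<in> adjoin G H e"
  then obtain h c where h: "h \<in> H" and x: "x = h \<otimes> e [^] (c::int)" by (rule adjoinE)
  have "e [^] c = (e [^] m) [^] (c div m) \<otimes> e [^] (c mod m)"
    using int_pow_mult[OF e, of "m * (c div m)" "c mod m"] e by (simp add: int_pow_pow)
  then have "x = (h \<otimes> (e [^] m) [^] (c div m)) \<otimes> e [^] (c mod m)"
    using x e subgroup.mem_carrier[OF H h] by (simp add: m_assoc)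
  moreover have "h \<otimes> (e [^] m) [^] (c div m) \<in> H"
    using H h m(2) by (simp add: subgroup.m_closed subgroup_int_pow_closed)
  moreover have "c mod m \<in> {0..<m}" using m(1) by simp
  ultimately show "x \<in> (\<Union>s\<in>{0..<m}. H #> e [^] s)" unfolding r_coset_def by blast
qed

end

section \<open>Compact sets and continuous characters\<close>

lemma property_hD:
  assumes "property_h G X" "subgroup N G" "countable N" "\<phi> \<in> hom (G\<lparr>carrier := N\<rparr>) circle_group"
  obtains g where "g \<in> hom G circle_group" "continuous_map X circle_top g" "\<And>x. x \<in> N \<Longrightarrow> g x = \<phi> x"
  using assms unfolding property_h_def h_embedded_def by blast

lemma compactin_translate:
  assumes tag: "topological_ab_group G X" and K: "compactin X K" and t: "t \<in> carrier G"
  shows "compactin X ((\<lambda>x. x \<otimes>\<^bsub>G\<^esub> t) ` K)"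
proof -
  have "topspace X = carrier G" "continuous_map (prod_topology X X) X (\<lambda>(x, y). x \<otimes>\<^bsub>G\<^esub> y)"
    using tag by (simp_all add: topological_ab_group_def)
  then have "continuous_map X X ((\<lambda>(x, y). x \<otimes>\<^bsub>G\<^esub> y) \<circ> (\<lambda>x. (x, t)))"
    using t by (intro continuous_map_compose[of _ "prod_topology X X"] continuous_map_pairedI) auto
  then show ?thesis using K by (simp add: image_compactin o_def)
qed

lemma compactin_accumulation_point:
  assumes K: "compactin X K" and B: "B \<subseteq> K" "infinite B"
  obtains p where "p \<in> K" "\<And>U. openin X U \<Longrightarrow> p \<in> U \<Longrightarrow> infinite (U \<inter> B)"
proof -
  have "\<exists>p\<in>K. \<forall>U. openin X U \<and> p \<in> U \<longrightarrow> infinite (U \<inter> B)"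
  proof (rule ccontr)
    assume "\<not> ?thesis"
    then have "\<forall>p\<in>K. \<exists>U. openin X U \<and> p \<in> U \<and> finite (U \<inter> B)" by blast
    then obtain V where V: "\<And>p. p \<in> K \<Longrightarrow> openin X (V p) \<and> p \<in> V p \<and> finite (V p \<inter> B)"
      by metis
    then obtain \<F> where \<F>: "finite \<F>" "\<F> \<subseteq> V ` K" "K \<subseteq> \<Union>\<F>"
      using compactinD[OF K, of "V ` K"] by blast
    have "B \<subseteq> (\<Union>U\<in>\<F>. U \<inter> B)" using B(1) \<F>(3) by blast
    moreover have "finite (U \<inter> B)" if U: "U \<in> \<F>" for U
    proof -
      obtain p where "p \<in> K" "U = V p" using U \<F>(2) by blast
      then show ?thesis using V by blast
    qed
    then have "finite (\<Union>U\<in>\<F>. U \<inter> B)" using \<F>(1) by blast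
    ultimately show False using B(2) finite_subset by blast
  qed
  then show ?thesis using that by blast
qed

lemma closedin_countable_subgroup:
  assumes tag: "topological_ab_group G X" and ph: "property_h G X"
    and N: "subgroup N G" "countable N"
  shows "closedin X N"
proof -
  interpret comm_group G using tag by (simp add: topological_ab_group_def)
  have carrier: "topspace X = carrier G" using tag by (simp add: topological_ab_group_def)
  have "\<exists>U. openin X U \<and> p \<in> U \<and> U \<subseteq> topspace X - N" if p: "p \<in> topspace X - N" for p
  proof -
    have pc: "p \<in> carrier G" "p \<notin> N" using p carrier by auto
    have "(\<lambda>_. 1) \<in> hom (G\<lparr>carrier := N\<rparr>) circle_group" by (simp add: hom_circle_group_iff)
    then obtain \<psi> where \<psi>: "\<psi> \<in> hom (G\<lparr>carrier := adjoin G N p\<rparr>) circle_group"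
      "\<forall>x\<in>N. \<psi> x = 1" "Re (\<psi> p / 1) \<le> 0"
      using character_extend_adjoin_half_plane[OF N(1) _ pc, of _ 1] by auto
    obtain g where g: "g \<in> hom G circle_group" "continuous_map X circle_top g"
      "\<And>x. x \<in> adjoin G N p \<Longrightarrow> g x = \<psi> x"
      using property_hD[OF ph subgroup_adjoin[OF N(1) pc(1)] countable_adjoin[OF N(2)] \<psi>(1)] by blast
    have "g x = 1" if "x \<in> N" for x using g(3) \<psi>(2) subset_adjoin[OF N(1) pc(1)] that by auto
    moreover have "g p \<noteq> 1" using g(3) \<psi>(3) mem_adjoin_self[OF N(1) pc(1)] by auto
    moreover have "openin X {x \<in> topspace X. g x \<in> - {1}}"
      using continuous_map_circle_top_openin_preimage[OF g(2), of "- {1}"] by (simp add: open_Compl)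
    ultimately show ?thesis using p by (intro exI[of _ "{x \<in> topspace X. g x \<in> - {1}}"]) auto
  qed
  then have "openin X (topspace X - N)" by (subst openin_subopen) blast
  then show ?thesis using subgroup.subset[OF N(1)] carrier by (simp add: closedin_def)
qed

definition char_apart :: "('a, 'b) monoid_scheme \<Rightarrow> 'a topology \<Rightarrow> 'a \<Rightarrow> 'a set \<Rightarrow> bool" where
  "char_apart G X p S \<longleftrightarrow>
     (\<exists>g \<in> hom G circle_group. continuous_map X circle_top g \<and> (\<forall>a\<in>S. Re (g a / g p) \<le> 0))"

lemma char_apart_subset: "char_apart G X p S \<Longrightarrow> S' \<subseteq> S \<Longrightarrow> char_apart G X p S'"
  unfolding char_apart_def by blast

lemma diagonal_thinning:
  assumes A: "infinite A"
    and thin: "\<And>j S. S \<subseteq> A \<Longrightarrow> infinite S \<Longrightarrow> \<exists>S'\<subseteq>S. infinite S' \<and> Q j S'"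
    and anti: "\<And>j S S'. Q j S \<Longrightarrow> S' \<subseteq> S \<Longrightarrow> Q j S'"
  obtains b :: "nat \<Rightarrow> 'a" where "inj b" "range b \<subseteq> A" "\<And>j. Q j (b ` {j..})"
proof -
  define stage where "stage j x \<longleftrightarrow> fst x \<subseteq> A \<and> infinite (fst x) \<and> snd x \<in> fst x \<and> Q j (fst x)"
    for j and x :: "'a set \<times> 'a"
  have "\<exists>f. \<forall>j. stage j (f j) \<and> fst (f (Suc j)) \<subseteq> fst (f j) - {snd (f j)}"
  proof (rule dependent_nat_choice)
    obtain S where "S \<subseteq> A" "infinite S" "Q 0 S" using thin[OF order_refl A] by blast
    moreover obtain a where "a \<in> S" using \<open>infinite S\<close> by (metis infinite_imp_nonempty ex_in_conv)
    ultimately show "\<exists>x. stage 0 x" by (intro exI[of _ "(S, a)"]) (simp add: stage_def)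
  next
    fix x j assume "stage j x"
    then have "fst x - {snd x} \<subseteq> A" "infinite (fst x - {snd x})" by (auto simp: stage_def)
    then obtain S where S: "S \<subseteq> fst x - {snd x}" "infinite S" "Q (Suc j) S"
      using thin by blast
    moreover obtain a where "a \<in> S" using S(2) by (metis infinite_imp_nonempty ex_in_conv)
    ultimately show "\<exists>y. stage (Suc j) y \<and> fst y \<subseteq> fst x - {snd x}"
      using \<open>fst x - {snd x} \<subseteq> A\<close> by (intro exI[of _ "(S, a)"]) (auto simp: stage_def)
  qed
  then obtain f where f: "\<And>j. stage j (f j)" "\<And>j. fst (f (Suc j)) \<subseteq> fst (f j) - {snd (f j)}"
    by blast
  define S where "S j = fst (f j)" for j
  define b where "b j = snd (f j)" for j
  have "decseq S" using f(2) by (intro decseq_SucI) (auto simp: S_def)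
  then have b_mem: "b i \<in> S j" if "j \<le> i" for i j
    using f(1)[of i] that by (auto simp: stage_def S_def b_def decseq_def)
  have "b j \<noteq> b i" if "i < j" for i j
    using b_mem[of "Suc i" j] f(2)[of i] that by (auto simp: S_def b_def)
  then have "inj b" by (metis injI linorder_neqE)
  moreover have "range b \<subseteq> A" using b_mem[of 0] f(1)[of 0] by (auto simp: stage_def S_def)
  moreover have "Q j (b ` {j..})" for j
  proof (rule anti)
    show "Q j (S j)" using f(1)[of j] by (simp add: stage_def S_def)
    show "b ` {j..} \<subseteq> S j" using b_mem by auto
  qed
  ultimately show thesis using that by blast
qed

lemma char_apart_open_nbhd:
  assumes tag: "topological_ab_group G X" and apart: "char_apart G X p T" and p: "p \<in> topspace X"
  obtains U where "openin X U" "p \<in> U" "U \<inter> T = {}"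
proof -
  obtain g where g: "g \<in> hom G circle_group" "continuous_map X circle_top g"
    "\<And>a. a \<in> T \<Longrightarrow> Re (g a / g p) \<le> 0"
    using apart unfolding char_apart_def by blast
  have "norm (g p) = 1"
    using g(1) p tag by (simp add: hom_circle_group_iff topological_ab_group_def)
  then have gp: "g p \<noteq> 0" by auto
  define U where "U = {x \<in> topspace X. g x \<in> {w. 0 < Re (w / g p)}}"
  have "openin X U"
    unfolding U_def using gp
    by (intro continuous_map_circle_top_openin_preimage[OF g(2)] open_Collect_less continuous_intros) auto
  moreover have "p \<in> U" using p gp by (simp add: U_def)
  moreover have "U \<inter> T = {}" using g(3) by (force simp: U_def)
  ultimately show thesis by (rule that)
qed

text \<open>
  Enumerate \<open>N\<close> as \<open>p\<^sub>0, p\<^sub>1, \<dots>\<close> and thin out diagonally to a sequence \<open>b\<close> in \<open>A\<close> whose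
  \<open>j\<close>-th tail is apart from \<open>p\<^sub>j\<close>. An accumulation point of \<open>b\<close> in \<open>K\<close> lies in the closed set
  \<open>N\<close>, say it is \<open>p\<^sub>j\<close>; but a neighbourhood of \<open>p\<^sub>j\<close> misses the \<open>j\<close>-th tail.
\<close>
lemma finite_if_char_apart_thinnable:
  assumes tag: "topological_ab_group G X" and ph: "property_h G X" and K: "compactin X K"
    and N: "subgroup N G" "countable N" and A: "A \<subseteq> K" "A \<subseteq> N"
    and thin: "\<And>p S. p \<in> N \<Longrightarrow> S \<subseteq> A \<Longrightarrow> infinite S \<Longrightarrow>
                 \<exists>S'\<subseteq>S. infinite S' \<and> char_apart G X p S'"
  shows "finite A"
proof (rule ccontr)
  assume "infinite A"
  have "N \<noteq> {}" using subgroup.one_closed[OF N(1)] by blast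
  then have N_range: "N = range (from_nat_into N)" using N(2) by (simp add: range_from_nat_into)
  obtain b where b: "inj b" "range b \<subseteq> A" "\<And>j. char_apart G X (from_nat_into N j) (b ` {j..})"
  proof (rule diagonal_thinning[OF \<open>infinite A\<close>, where Q = "\<lambda>j. char_apart G X (from_nat_into N j)"])
    show "\<exists>S'\<subseteq>S. infinite S' \<and> char_apart G X (from_nat_into N j) S'" if "S \<subseteq> A" "infinite S" for j S
      using thin[OF _ that] from_nat_into[OF \<open>N \<noteq> {}\<close>] by blast
  qed (auto intro: char_apart_subset)
  have "infinite (range b)" using b(1) by (simp add: range_inj_infinite)
  then obtain p where p: "p \<in> K" "\<And>U. openin X U \<Longrightarrow> p \<in> U \<Longrightarrow> infinite (U \<inter> range b)"
    using compactin_accumulation_point[OF K] b(2) A(1) by (metis order_trans)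
  have p_top: "p \<in> topspace X" using K p(1) compactin_subset_topspace by blast
  have "p \<in> X closure_of range b"
    unfolding in_closure_of
  proof (intro conjI allI impI p_top)
    fix U assume "p \<in> U \<and> openin X U"
    then have "infinite (U \<inter> range b)" using p(2) by blast
    then show "\<exists>y. y \<in> range b \<and> y \<in> U" using infinite_imp_nonempty by blast
  qed
  moreover have "X closure_of range b \<subseteq> N"
    using b(2) A(2) closedin_countable_subgroup[OF tag ph N] by (intro closure_of_minimal) auto
  ultimately obtain j where j: "p = from_nat_into N j" using N_range by blast
  obtain U where U: "openin X U" "p \<in> U" "U \<inter> b ` {j..} = {}"
    using char_apart_open_nbhd[OF tag b(3)[of j, folded j] p_top] by blast
  have "U \<inter> range b \<subseteq> b ` {..<j}"
  proof
    fix x assume "x \<in> U \<inter> range b"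
    then obtain i where i: "x = b i" "b i \<in> U" by blast
    then have "i < j" using U(3) by (metis disjoint_iff atLeast_iff imageI not_less)
    then show "x \<in> b ` {..<j}" using i by simp
  qed
  then show False using p(2)[OF U(1,2)] finite_subset by blast
qed

section \<open>Finitely generated subgroups meet compact sets in finite sets\<close>

context comm_group
begin

lemma finite_compact_inter_rcos:
  assumes tag: "topological_ab_group G X" and H: "H \<subseteq> carrier G"
    and fin: "\<And>K. compactin X K \<Longrightarrow> finite (K \<inter> H)"
    and K: "compactin X K" and t: "t \<in> carrier G"
  shows "finite (K \<inter> (H #>\<^bsub>G\<^esub> t))"
proof -
  have Kc: "K \<subseteq> carrier G"
    using compactin_subset_topspace[OF K] tag by (simp add: topological_ab_group_def)
  define \<tau> where "\<tau> x = x \<otimes> inv t" for x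
  have "compactin X (\<tau> ` K)" unfolding \<tau>_def using compactin_translate[OF tag K] t by simp
  then have "finite (\<tau> ` K \<inter> H)" by (rule fin)
  moreover have "\<tau> ` (K \<inter> (H #> t)) \<subseteq> \<tau> ` K \<inter> H"
  proof (intro subsetI, elim imageE)
    fix x y assume "y = \<tau> x" "x \<in> K \<inter> (H #> t)"
    then obtain h where "h \<in> H" "x = h \<otimes> t" "x \<in> K" by (auto simp: r_coset_def)
    then show "y \<in> \<tau> ` K \<inter> H" using H t \<open>y = \<tau> x\<close> by (auto simp: \<tau>_def m_assoc)
  qed
  ultimately have "finite (\<tau> ` (K \<inter> (H #> t)))" by (rule finite_subset[rotated])
  moreover have "inj_on \<tau> (K \<inter> (H #> t))"
  proof (rule inj_onI)
    fix x y assume "x \<in> K \<inter> (H #> t)" "y \<in> K \<inter> (H #> t)" "\<tau> x = \<tau> y"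
    moreover have "x \<in> carrier G" "y \<in> carrier G"
      using Kc \<open>x \<in> K \<inter> (H #> t)\<close> \<open>y \<in> K \<inter> (H #> t)\<close> by auto
    ultimately show "x = y" using t by (simp add: \<tau>_def)
  qed
  ultimately show ?thesis by (rule finite_imageD)
qed

end

lemma char_apart_thinning_from_coordinate:
  assumes ph: "property_h G X" and N: "subgroup N G" "countable N"
    and chars: "\<And>z. norm z = 1 \<Longrightarrow>
                  \<exists>\<psi> \<in> hom (G\<lparr>carrier := N\<rparr>) circle_group. \<forall>x\<in>N. \<psi> x = z powi \<kappa> x"
    and S: "S \<subseteq> N" "infinite (\<kappa> ` S)" and p: "p \<in> N"
  shows "\<exists>S'\<subseteq>S. infinite S' \<and> char_apart G X p S'"
proof -
  have "(\<lambda>a. \<kappa> a - \<kappa> p) ` S = (\<lambda>n. n - \<kappa> p) ` \<kappa> ` S" by (simp add: image_image)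
  moreover have "inj_on (\<lambda>n. n - \<kappa> p) (\<kappa> ` S)" by (simp add: inj_on_def)
  ultimately have "infinite ((\<lambda>a. \<kappa> a - \<kappa> p) ` S)" using S(2) by (simp add: finite_image_iff)
  then obtain z where z: "norm z = 1" "infinite {a\<in>S. Re (z powi (\<kappa> a - \<kappa> p)) \<le> 0}"
    using exists_unit_powi_nonpos_infinitely_often by blast
  define S' where "S' = {a\<in>S. Re (z powi (\<kappa> a - \<kappa> p)) \<le> 0}"
  obtain \<psi> where \<psi>: "\<psi> \<in> hom (G\<lparr>carrier := N\<rparr>) circle_group" "\<forall>x\<in>N. \<psi> x = z powi \<kappa> x"
    using chars[OF z(1)] by blast
  obtain g where g: "g \<in> hom G circle_group" "continuous_map X circle_top g" "\<And>x. x \<in> N \<Longrightarrow> g x = \<psi> x"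
    using property_hD[OF ph N \<psi>(1)] by blast
  have "z \<noteq> 0" using z(1) by auto
  then have "g a / g p = z powi (\<kappa> a - \<kappa> p)" if "a \<in> N" for a
    using g(3) \<psi>(2) that p by (simp add: power_int_diff)
  then have "\<forall>a\<in>S'. Re (g a / g p) \<le> 0" using S(1) by (auto simp: S'_def)
  then have "char_apart G X p S'" using g(1,2) unfolding char_apart_def by blast
  moreover have "S' \<subseteq> S" "infinite S'" using z(2) by (auto simp: S'_def)
  ultimately show ?thesis by blast
qed

context comm_group
begin

lemma finite_compact_inter_adjoin_free:
  assumes tag: "topological_ab_group G X" and ph: "property_h G X"
    and H: "subgroup H G" "countable H" and e: "e \<in> carrier G"
    and free: "\<And>c::int. e [^]\<^bsub>G\<^esub> c \<in> H \<Longrightarrow> c = 0"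
    and fin: "\<And>K. compactin X K \<Longrightarrow> finite (K \<inter> H)" and K: "compactin X K"
  shows "finite (K \<inter> adjoin G H e)"
proof -
  obtain co where co: "\<And>h c. h \<in> H \<Longrightarrow> co (h \<otimes> e [^] c) = (c::int)"
    and chars: "\<And>z. norm z = 1 \<Longrightarrow>
      \<exists>\<psi> \<in> hom (G\<lparr>carrier := adjoin G H e\<rparr>) circle_group. \<forall>x\<in>adjoin G H e. \<psi> x = z powi co x"
    using adjoin_free_coordinate[OF H(1) e free] by blast
  have slice: "x \<in> H #> e [^] co x" if x: "x \<in> adjoin G H e" for x
  proof -
    obtain h and c :: int where h: "h \<in> H" and x_eq: "x = h \<otimes> e [^] c" using x by (rule adjoinE)
    then have "co x = c" using co by simp
    then show ?thesis using h x_eq unfolding r_coset_def by blast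
  qed
  show ?thesis
  proof (rule finite_if_char_apart_thinnable[OF tag ph K subgroup_adjoin[OF H(1) e] countable_adjoin[OF H(2)]])
    fix p S assume p: "p \<in> adjoin G H e" and S: "S \<subseteq> K \<inter> adjoin G H e" "infinite S"
    have "infinite (co ` S)"
    proof
      assume "finite (co ` S)"
      then have "finite (\<Union>c\<in>co ` S. K \<inter> (H #> e [^] c))"
        using e by (intro finite_UN_I) (simp_all add: finite_compact_inter_rcos[OF tag subgroup.subset[OF H(1)] fin K])
      moreover have "S \<subseteq> (\<Union>c\<in>co ` S. K \<inter> (H #> e [^] c))"
      proof
        fix x assume "x \<in> S"
        then have "x \<in> K \<inter> (H #> e [^] co x)" using S(1) slice by blast
        then show "x \<in> (\<Union>c\<in>co ` S. K \<inter> (H #> e [^] c))" using \<open>x \<in> S\<close> by blast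
      qed
      ultimately show False using S(2) finite_subset by blast
    qed
    moreover have "S \<subseteq> adjoin G H e" using S(1) by blast
    ultimately show "\<exists>S'\<subseteq>S. infinite S' \<and> char_apart G X p S'"
      by (intro char_apart_thinning_from_coordinate[OF ph subgroup_adjoin[OF H(1) e] countable_adjoin[OF H(2)] chars _ _ p])
  qed simp_all
qed

lemma finite_compact_inter_adjoin:
  assumes tag: "topological_ab_group G X" and ph: "property_h G X"
    and H: "subgroup H G" "countable H" and e: "e \<in> carrier G"
    and fin: "\<And>K. compactin X K \<Longrightarrow> finite (K \<inter> H)" and K: "compactin X K"
  shows "finite (K \<inter> adjoin G H e)"
proof (cases "\<exists>c::int. c \<noteq> 0 \<and> e [^]\<^bsub>G\<^esub> c \<in> H")
  case True
  obtain c :: int where "c \<noteq> 0" "e [^] c \<in> H" using True by blast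
  then have m: "0 < \<bar>c\<bar>" "e [^] \<bar>c\<bar> \<in> H" using int_pow_abs_in_subgroup[OF H(1) e] by auto
  have "K \<inter> adjoin G H e \<subseteq> (\<Union>s\<in>{0..<\<bar>c\<bar>}. K \<inter> (H #> e [^] s))"
    using adjoin_subset_UN_rcos[OF H(1) e m] by blast
  moreover have "finite (\<Union>s\<in>{0..<\<bar>c\<bar>}. K \<inter> (H #> e [^] s))"
    using e by (intro finite_UN_I) (simp_all add: finite_compact_inter_rcos[OF tag subgroup.subset[OF H(1)] fin K])
  ultimately show ?thesis by (rule finite_subset)
next
  case False
  then show ?thesis using finite_compact_inter_adjoin_free[OF tag ph H e _ fin K] by blast
qed

lemma finite_compact_inter_span_list:
  assumes tag: "topological_ab_group G X" and ph: "property_h G X"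
  shows "set es \<subseteq> carrier G \<Longrightarrow> compactin X K \<Longrightarrow> finite (K \<inter> span_list G es)"
proof (induction es arbitrary: K)
  case Nil
  then show ?case by simp
next
  case (Cons e es)
  then have "set es \<subseteq> carrier G" "e \<in> carrier G" by simp_all
  then show ?case
    using finite_compact_inter_adjoin[OF tag ph subgroup_span_list countable_span_list] Cons by simp
qed

end

section \<open>Compact sets avoiding finitely generated subgroups\<close>

lemma exists_sequence_avoiding:
  assumes avoid: "\<And>xs. set xs \<subseteq> K \<Longrightarrow> \<exists>a\<in>K. a \<notin> F xs"
  shows "\<exists>a. \<forall>n. a n \<in> K \<and> a n \<notin> F (map a (rev [0..<n]))"
proof -
  define pick where "pick xs = (SOME a. a \<in> K \<and> a \<notin> F xs)" for xs
  define L where "L n = rec_nat [] (\<lambda>_ xs. pick xs # xs) n" for n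
  have L_Suc: "L (Suc n) = pick (L n) # L n" for n by (simp add: L_def)
  have pick: "pick xs \<in> K \<and> pick xs \<notin> F xs" if "set xs \<subseteq> K" for xs
  proof -
    have "\<exists>a. a \<in> K \<and> a \<notin> F xs" using avoid[OF that] by blast
    then show ?thesis unfolding pick_def by (rule someI_ex)
  qed
  have L_K: "set (L n) \<subseteq> K" for n
    by (induction n) (simp_all add: L_def[of 0] L_Suc pick)
  define a where "a n = pick (L n)" for n
  have "L n = map a (rev [0..<n])" for n
    by (induction n) (simp_all add: L_def[of 0] L_Suc a_def)
  then show ?thesis using pick[OF L_K] by (intro exI[of _ a]) (auto simp: a_def)
qed

lemma (in group) subgroup_UN_chain:
  assumes sub: "\<And>n. subgroup (H n) G" and mono: "\<And>n. H n \<subseteq> H (Suc n)"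
  shows "subgroup (\<Union>n. H n) G"
proof (rule subgroupI)
  have mono_le: "i \<le> j \<Longrightarrow> H i \<subseteq> H j" for i j using mono by (rule lift_Suc_mono_le)
  show "(\<Union>n. H n) \<subseteq> carrier G" using sub subgroup.subset by blast
  show "(\<Union>n. H n) \<noteq> {}" using subgroup.one_closed[OF sub] by blast
  show "inv x \<in> (\<Union>n. H n)" if "x \<in> (\<Union>n. H n)" for x
    using that subgroup.m_inv_closed[OF sub] by blast
  show "x \<otimes> y \<in> (\<Union>n. H n)" if xy: "x \<in> (\<Union>n. H n)" "y \<in> (\<Union>n. H n)" for x y
  proof -
    obtain i j where "x \<in> H i" "y \<in> H j" using xy by blast
    then have "x \<in> H (max i j)" "y \<in> H (max i j)" using mono_le[of i "max i j"] mono_le[of j "max i j"] by auto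
    then show ?thesis using subgroup.m_closed[OF sub] by blast
  qed
qed

lemma character_UN_chain:
  assumes sub: "\<And>n. subgroup (H n) G" and mono: "\<And>n. H n \<subseteq> H (Suc n)"
    and C: "\<And>n. C n \<in> hom (G\<lparr>carrier := H n\<rparr>) circle_group"
    and compat: "\<And>n x. x \<in> H n \<Longrightarrow> C (Suc n) x = C n x"
  obtains \<omega> where "\<omega> \<in> hom (G\<lparr>carrier := (\<Union>n. H n)\<rparr>) circle_group"
    "\<And>n x. x \<in> H n \<Longrightarrow> \<omega> x = C n x"
proof -
  have mono_le: "i \<le> j \<Longrightarrow> H i \<subseteq> H j" for i j using mono by (rule lift_Suc_mono_le)
  have compat_le: "C j x = C i x" if "x \<in> H i" "i \<le> j" for i j x
    using that(2)
  proof (induction j rule: dec_induct)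
    case (step n)
    then show ?case using compat[of x n] mono_le[OF step.hyps(1)] that(1) by auto
  qed simp
  define \<omega> where "\<omega> x = C (LEAST n. x \<in> H n) x" for x
  have \<omega>: "\<omega> x = C n x" if "x \<in> H n" for n x
  proof -
    have "x \<in> H (LEAST n. x \<in> H n)" "(LEAST n. x \<in> H n) \<le> n"
      using LeastI[of "\<lambda>n. x \<in> H n", OF that] Least_le[of "\<lambda>n. x \<in> H n", OF that] by simp_all
    then show ?thesis unfolding \<omega>_def by (rule compat_le[symmetric])
  qed
  have "\<omega> \<in> hom (G\<lparr>carrier := (\<Union>n. H n)\<rparr>) circle_group"
    unfolding hom_circle_group_iff
  proof (intro conjI ballI)
    fix x assume "x \<in> carrier (G\<lparr>carrier := (\<Union>n. H n)\<rparr>)"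
    then obtain n where "x \<in> H n" by auto
    then show "norm (\<omega> x) = 1" using \<omega> C[of n] by (simp add: hom_circle_group_iff)
  next
    fix x y assume "x \<in> carrier (G\<lparr>carrier := (\<Union>n. H n)\<rparr>)" "y \<in> carrier (G\<lparr>carrier := (\<Union>n. H n)\<rparr>)"
    then obtain i j where "x \<in> H i" "y \<in> H j" by auto
    then have xy: "x \<in> H (max i j)" "y \<in> H (max i j)"
      using mono_le[of i "max i j"] mono_le[of j "max i j"] by auto
    then have "x \<otimes>\<^bsub>G\<^esub> y \<in> H (max i j)" using subgroup.m_closed[OF sub] by blast
    then show "\<omega> (x \<otimes>\<^bsub>G\<lparr>carrier := (\<Union>n. H n)\<rparr>\<^esub> y) = \<omega> x * \<omega> y"
      using \<omega> xy C[of "max i j"] by (simp add: hom_circle_group_iff)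
  qed
  then show thesis using that \<omega> by blast
qed

context comm_group
begin

lemma character_chain_half_plane:
  assumes sub: "\<And>n. subgroup (H n) G" and H_Suc: "\<And>n. H (Suc n) = adjoin G (H n) (a n)"
    and a: "\<And>n. a n \<in> carrier G" "\<And>n. a n \<notin> H n"
  obtains C where "\<And>n. C n \<in> hom (G\<lparr>carrier := H n\<rparr>) circle_group"
    "\<And>n x. x \<in> H n \<Longrightarrow> C (Suc n) x = C n x"
    "\<And>n. p \<in> H n \<Longrightarrow> Re (C (Suc n) (a n) / C n p) \<le> 0"
proof -
  have "\<exists>C. \<forall>n. C n \<in> hom (G\<lparr>carrier := H n\<rparr>) circle_group \<and>
      (\<forall>x\<in>H n. C (Suc n) x = C n x) \<and> (p \<in> H n \<longrightarrow> Re (C (Suc n) (a n) / C n p) \<le> 0)"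
  proof (rule dependent_nat_choice)
    show "\<exists>\<phi>. \<phi> \<in> hom (G\<lparr>carrier := H 0\<rparr>) circle_group"
      by (intro exI[of _ "\<lambda>_. 1"]) (simp add: hom_circle_group_iff)
  next
    fix \<phi> n assume \<phi>: "\<phi> \<in> hom (G\<lparr>carrier := H n\<rparr>) circle_group"
    define r where "r = (if p \<in> H n then \<phi> p else 1)"
    have "norm r = 1" using \<phi> by (simp add: r_def hom_circle_group_iff)
    then obtain \<psi> where "\<psi> \<in> hom (G\<lparr>carrier := H (Suc n)\<rparr>) circle_group"
        "\<forall>x\<in>H n. \<psi> x = \<phi> x" "Re (\<psi> (a n) / r) \<le> 0"
      using character_extend_adjoin_half_plane[OF sub \<phi> a] H_Suc by metis
    then show "\<exists>\<psi>. \<psi> \<in> hom (G\<lparr>carrier := H (Suc n)\<rparr>) circle_group \<and>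
        (\<forall>x\<in>H n. \<psi> x = \<phi> x) \<and> (p \<in> H n \<longrightarrow> Re (\<psi> (a n) / \<phi> p) \<le> 0)"
      by (auto simp: r_def)
  qed
  then show thesis using that by blast
qed

lemma char_apart_tail_of_chain:
  assumes ph: "property_h G X" and sub: "\<And>n. subgroup (H n) G"
    and H_Suc: "\<And>n. H (Suc n) = adjoin G (H n) (a n)"
    and countable: "\<And>n. countable (H n)"
    and a: "\<And>n. a n \<in> carrier G" "\<And>n. a n \<notin> H n" and p: "p \<in> H n0"
  shows "char_apart G X p (a ` {n0..})"
proof -
  have mono: "H n \<subseteq> H (Suc n)" for n using subset_adjoin[OF sub a(1)] H_Suc by simp
  obtain C where C: "\<And>n. C n \<in> hom (G\<lparr>carrier := H n\<rparr>) circle_group"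
      "\<And>n x. x \<in> H n \<Longrightarrow> C (Suc n) x = C n x" "\<And>n. p \<in> H n \<Longrightarrow> Re (C (Suc n) (a n) / C n p) \<le> 0"
    using character_chain_half_plane[where H = H and a = a and p = p, OF sub H_Suc a] by blast
  obtain \<omega> where \<omega>: "\<omega> \<in> hom (G\<lparr>carrier := (\<Union>n. H n)\<rparr>) circle_group"
      "\<And>n x. x \<in> H n \<Longrightarrow> \<omega> x = C n x"
    using character_UN_chain[where H = H and C = C, OF sub mono C(1,2)] by blast
  obtain g where g: "g \<in> hom G circle_group" "continuous_map X circle_top g"
      "\<And>x. x \<in> (\<Union>n. H n) \<Longrightarrow> g x = \<omega> x"
    using property_hD[OF ph subgroup_UN_chain[where H = H, OF sub mono] countable_UN[OF _ countable] \<omega>(1)] by blast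
  have "Re (g (a n) / g p) \<le> 0" if "n0 \<le> n" for n
  proof -
    have p_n: "p \<in> H n" using p lift_Suc_mono_le[of H, OF mono that] by blast
    have a_n: "a n \<in> H (Suc n)" using mem_adjoin_self[OF sub a(1)] H_Suc by simp
    have "g (a n) = \<omega> (a n)" using a_n by (intro g(3)) blast
    also have "\<dots> = C (Suc n) (a n)" using a_n by (rule \<omega>(2))
    moreover have "g p = \<omega> p" using p_n by (intro g(3)) blast
    moreover have "\<dots> = C n p" using p_n by (rule \<omega>(2))
    ultimately show ?thesis using C(3)[OF p_n] by simp
  qed
  then show ?thesis using g(1,2) unfolding char_apart_def by blast
qed

end

lemma finite_compact_if_inter_span_lists_finite:
  assumes tag: "topological_ab_group G X" and ph: "property_h G X" and K: "compactin X K"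
    and fin: "\<And>es. set es \<subseteq> K \<Longrightarrow> finite (K \<inter> span_list G es)"
  shows "finite K"
proof (rule ccontr)
  assume "infinite K"
  interpret comm_group G using tag by (simp add: topological_ab_group_def)
  have Kc: "K \<subseteq> carrier G"
    using compactin_subset_topspace[OF K] tag by (simp add: topological_ab_group_def)
  have "\<exists>a\<in>K. a \<notin> span_list G es" if "set es \<subseteq> K" for es
    using fin[OF that] \<open>infinite K\<close> by (metis Diff_infinite_finite Int_Diff Int_absorb2 Int_lower1 ex_in_conv
        finite.emptyI subset_iff)
  then obtain a where a: "\<And>n. a n \<in> K" "\<And>n. a n \<notin> span_list G (map a (rev [0..<n]))"
    using exists_sequence_avoiding[where F = "span_list G"] by blast
  define H where "H n = span_list G (map a (rev [0..<n]))" for n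
  have H_Suc: "H (Suc n) = adjoin G (H n) (a n)" for n by (simp add: H_def)
  have ac: "a n \<in> carrier G" for n using a(1) Kc by blast
  have sub: "subgroup (H n) G" for n unfolding H_def using ac by (intro subgroup_span_list) auto
  have countable: "countable (H n)" for n by (simp add: H_def countable_span_list)
  have mono: "H n \<subseteq> H (Suc n)" for n using subset_adjoin[OF sub ac] H_Suc by simp
  have a_H: "a n \<in> H (Suc n)" for n using mem_adjoin_self[OF sub ac] H_Suc by simp
  have UN_countable: "countable (\<Union>n. H n)" by (intro countable_UN) (simp_all add: countable)
  have "inj a"
  proof (rule injI)
    have "a i \<noteq> a j" if "i < j" for i j
      using a_H[of i] lift_Suc_mono_le[of H, OF mono, of "Suc i" j] a(2)[of j] that by (auto simp: H_def)
    then show "a i = a j \<Longrightarrow> i = j" for i j by (metis linorder_neqE)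
  qed
  moreover have "finite (range a)"
  proof (rule finite_if_char_apart_thinnable[OF tag ph K subgroup_UN_chain[where H = H, OF sub mono] UN_countable])
    show "range a \<subseteq> K" "range a \<subseteq> (\<Union>n. H n)" using a(1) a_H by auto
    fix p S assume "p \<in> (\<Union>n. H n)" and S: "S \<subseteq> range a" "infinite S"
    then obtain n0 where p: "p \<in> H n0" by blast
    have "char_apart G X p (a ` {n0..})"
      using char_apart_tail_of_chain[where H = H and a = a, OF ph sub H_Suc countable ac] a(2) p by (simp add: H_def)
    moreover have "S - a ` {..<n0} \<subseteq> a ` {n0..}"
    proof
      fix x assume x: "x \<in> S - a ` {..<n0}"
      then obtain i where "x = a i" using S(1) by blast
      then show "x \<in> a ` {n0..}" using x by (cases "n0 \<le> i") auto
    qed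
    moreover have "infinite (S - a ` {..<n0})" using S(2) by (simp add: Diff_infinite_finite)
    ultimately show "\<exists>S'\<subseteq>S. infinite S' \<and> char_apart G X p S'"
      by (meson Diff_subset char_apart_subset)
  qed
  ultimately show False by (simp add: finite_image_iff)
qed

theorem lemma2p3:
  fixes G :: "('a, 'b) monoid_scheme" and X :: "'a topology"
  assumes "topological_ab_group G X"
    and "totally_bounded_group G X"
    and "property_h G X"
  shows "\<forall>K. compactin X K \<longrightarrow> finite K"
proof (intro allI impI)
  fix K assume K: "compactin X K"
  have cg: "comm_group G" and Kc: "K \<subseteq> carrier G"
    using assms(1) compactin_subset_topspace[OF K] by (auto simp: topological_ab_group_def)
  have "finite (K \<inter> span_list G es)" if "set es \<subseteq> K" for es
    using comm_group.finite_compact_inter_span_list[OF cg assms(1,3)] that Kc K by blast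
  then show "finite K" by (rule finite_compact_if_inter_span_lists_finite[OF assms(1,3) K])
qed

end
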